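(* Let $h_{SR_k}, h_{R_kD}, h_{SP}, h_{R_kP}, h_{R_kR_k} \in \mathbb{C}$, $\sigma_D > 0$, $\zeta \ge 0$, and set $\hat{\zeta} = |h_{R_kR_k}|^2 \zeta$, assumed $>0$. Let $\bar{\mathcal{I}}_P > 0$, $P_S^{\max} > 0$, $P_{R_k}^{\max} > 0$. Consider the optimization problem (Problem 2) $$\max_{P_S, P_{R_k}} \ \bar{\mathcal{C}}_k(P_S, P_{R_k}) = \frac{\frac{P_{R_k}|h_{R_kD}|^2}{\sigma_D^2}\cdot\frac{P_S |h_{SR_k}|^2}{\hat{\zeta} P_{R_k}}}{1 + \frac{P_{R_k}|h_{R_kD}|^2}{\sigma_D^2} + \frac{P_S |h_{SR_k}|^2}{\hat{\zeta} P_{R_k}}}$$ subject to $$|h_{SP}|^2 P_S + |h_{R_kP}|^2 P_{R_k}(1+\zeta) \le \bar{\mathcal{I}}_P,\quad 0 \le P_S \le P_S^{\max},\quad 0 \le P_{R_k} \le P_{R_k}^{\max}.$$ Then Problem 2 is a nonconvex optimization problem in the joint variable $(P_S, P_{R_k})$.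
   Context: A maximization problem is called a convex optimization problem if its objective is a concave function over a convex feasible set; it is nonconvex otherwise. The objective $\bar{\mathcal{C}}_k$ is defined for $P_{R_k} > 0$. The first constraint is the interference at the primary receiver in the non-coherent scenario. *)

theory Defs
  imports "HOL-Analysis.Analysis"
begin

text \<open>Objective of Problem 2, as a function of the joint variable (P_S, P_R).
  zhat = |h_RR|^2 * zeta.\<close>
definition Cbar :: "complex \<Rightarrow> complex \<Rightarrow> real \<Rightarrow> real \<Rightarrow> real \<times> real \<Rightarrow> real" where
  "Cbar hSR hRD sigmaD zhat p =
     (let PS = fst p; PR = snd p;
          g1 = PR * (cmod hRD)^2 / sigmaD^2;
          g2 = PS * (cmod hSR)^2 / (zhat * PR)
      in (g1 * g2) / (1 + g1 + g2))"

definition feasible ::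
  "complex \<Rightarrow> complex \<Rightarrow> real \<Rightarrow> real \<Rightarrow> real \<Rightarrow> real \<Rightarrow> (real \<times> real) set" where
  "feasible hSP hRP zeta IP PSmax PRmax =
     {(PS, PR). (cmod hSP)^2 * PS + (cmod hRP)^2 * PR * (1 + zeta) \<le> IP
        \<and> 0 \<le> PS \<and> PS \<le> PSmax \<and> 0 \<le> PR \<and> PR \<le> PRmax}"

text \<open>The objective is only defined for P_R > 0, so the set considered is
  the constraint set restricted to P_R > 0.\<close>
definition convex_max_problem :: "(real \<times> real) set \<Rightarrow> (real \<times> real \<Rightarrow> real) \<Rightarrow> bool" where
  "convex_max_problem D f \<longleftrightarrow> convex D \<and> concave_on D f"

end

theory Submission
  imports Defs
begin

text \<open>With \<open>a = |h_RD|^2 / \<sigma>_D^2\<close> and \<open>b = |h_SR|^2 / zhat\<close> the objective is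
  \<open>a b P_S / (1 + a P_R + b P_S / P_R)\<close>, so at the points \<open>(s^3 / (a b), j s / a)\<close> it
  equals \<open>s^3 / u j\<close> with \<open>u j = 1 + j s + s^2 / j\<close>. For small \<open>s > 0\<close> the \<open>s^2 / j\<close> term makes
  \<open>2 / u 2 < 1 / u 1 + 1 / u 3\<close>, so on the segment of constant \<open>P_S\<close> through the feasible points
  \<open>j = 1, 2, 3\<close> the objective lies strictly below its chord at the midpoint.\<close>

lemma midpoint_inequality_at_1_2_3:
  fixes s :: real
  assumes "0 < s" "s < 5/6"
  shows "s^3 / (1 + 2 * s + s^2 / 2) < 1/2 * (s^3 / (1 + s + s^2)) + 1/2 * (s^3 / (1 + 3 * s + s^2 / 3))"
proof -
  define u :: "real \<Rightarrow> real" where "u j = 1 + j * s + s^2 / j" for j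
  have u_pos: "u j > 0" if "j > 0" for j
    using that assms by (simp add: u_def add_pos_nonneg)
  have "u 2 * (u 1 + u 3) - 2 * u 1 * u 3 = s^2 * (5 - 6 * s) / 3"
    by (simp add: u_def field_simps power2_eq_square)
  also have "\<dots> > 0"
    using assms by simp
  finally have "2 * u 1 * u 3 < u 2 * (u 1 + u 3)" by simp
  then have "2 / u 2 < 1 / u 1 + 1 / u 3"
    using u_pos[of 1] u_pos[of 2] u_pos[of 3] by (simp add: field_simps)
  then have "s^3 / 2 * (2 / u 2) < s^3 / 2 * (1 / u 1 + 1 / u 3)"
    using assms by (intro mult_strict_left_mono) auto
  then have "s^3 / u 2 < 1/2 * (s^3 / u 1) + 1/2 * (s^3 / u 3)"
    by (simp add: field_simps)
  then show ?thesis by (simp only: u_def) simp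
qed

lemma Cbar_on_curve:
  fixes hSR hRD :: complex and sigmaD zhat s j :: real
  defines "a \<equiv> (cmod hRD)^2 / sigmaD^2" and "b \<equiv> (cmod hSR)^2 / zhat"
  assumes pos: "a > 0" "b > 0" "s > 0" "j > 0"
  shows "Cbar hSR hRD sigmaD zhat (s^3 / (a * b), j * s / a) = s^3 / (1 + j * s + s^2 / j)"
proof -
  have Cbar_eq: "Cbar hSR hRD sigmaD zhat (x, y) = a * b * x / (1 + a * y + b * x / y)"
    if "y \<noteq> 0" for x y
    using that unfolding Cbar_def Let_def a_def b_def by (simp add: ac_simps)
  have "j * s / a \<noteq> 0"
    using pos by simp
  then have "Cbar hSR hRD sigmaD zhat (s^3 / (a * b), j * s / a)
      = a * b * (s^3 / (a * b)) / (1 + a * (j * s / a) + b * (s^3 / (a * b)) / (j * s / a))"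
    by (rule Cbar_eq)
  also have "\<dots> = s^3 / (1 + j * s + s^2 / j)"
    using pos by (simp add: field_simps power2_eq_square power3_eq_cube)
  finally show ?thesis .
qed

lemma feasible_contains_square:
  assumes "zeta \<ge> 0" "IP > 0" "PSmax > 0" "PRmax > 0"
  obtains \<epsilon> :: real where "\<epsilon> > 0"
    and "\<And>x y. 0 \<le> x \<Longrightarrow> x \<le> \<epsilon> \<Longrightarrow> 0 \<le> y \<Longrightarrow> y \<le> \<epsilon> \<Longrightarrow>
           (x, y) \<in> feasible hSP hRP zeta IP PSmax PRmax"
proof
  define K where "K = (cmod hSP)^2 + (cmod hRP)^2 * (1 + zeta) + 1"
  have "K > 0"
    using assms(1) unfolding K_def by (intro add_nonneg_pos) auto
  define \<epsilon> where "\<epsilon> = min PSmax (min PRmax (IP / K))"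
  show "\<epsilon> > 0"
    using assms \<open>K > 0\<close> unfolding \<epsilon>_def by simp
  fix x y :: real
  assume x: "0 \<le> x" "x \<le> \<epsilon>" and y: "0 \<le> y" "y \<le> \<epsilon>"
  have "(cmod hSP)^2 * x + (cmod hRP)^2 * y * (1 + zeta)
      \<le> (cmod hSP)^2 * \<epsilon> + (cmod hRP)^2 * \<epsilon> * (1 + zeta)"
    using x y assms(1) by (intro add_mono mult_left_mono mult_right_mono) auto
  also have "\<dots> \<le> K * \<epsilon>"
    using x by (simp add: K_def algebra_simps)
  also have "\<dots> \<le> K * (IP / K)"
    using \<open>K > 0\<close> unfolding \<epsilon>_def by (intro mult_left_mono) auto
  also have "\<dots> = IP"
    using \<open>K > 0\<close> by simp
  finally show "(x, y) \<in> feasible hSP hRP zeta IP PSmax PRmax"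
    using x y unfolding feasible_def \<epsilon>_def by auto
qed

lemma curve_points_feasible:
  fixes a b :: real
  assumes "zeta \<ge> 0" "IP > 0" "PSmax > 0" "PRmax > 0" "a > 0" "b > 0"
  obtains s where "0 < s" "s \<le> 1/2"
    and "\<And>j. 0 \<le> j \<Longrightarrow> j \<le> 3 \<Longrightarrow> (s^3 / (a * b), j * s / a) \<in> feasible hSP hRP zeta IP PSmax PRmax"
proof -
  obtain \<epsilon> where "\<epsilon> > 0" and square:
    "\<And>x y. 0 \<le> x \<Longrightarrow> x \<le> \<epsilon> \<Longrightarrow> 0 \<le> y \<Longrightarrow> y \<le> \<epsilon> \<Longrightarrow>
       (x, y) \<in> feasible hSP hRP zeta IP PSmax PRmax"
    using feasible_contains_square assms(1-4) by metis
  define s where "s = min (1/2) (min (a * \<epsilon> / 3) (a * b * \<epsilon>))"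
  have "s \<le> a * \<epsilon> / 3" "s \<le> a * b * \<epsilon>"
    by (simp_all add: s_def)
  then have s: "0 < s" "s \<le> 1/2" "3 * s / a \<le> \<epsilon>" "s / (a * b) \<le> \<epsilon>"
    using assms(5,6) \<open>\<epsilon> > 0\<close> by (simp_all add: s_def pos_divide_le_eq mult.commute)
  have "s^3 \<le> s^1"
    using s by (intro power_decreasing) auto
  then have "s^3 / (a * b) \<le> s / (a * b)"
    using assms(5,6) by (simp add: divide_right_mono)
  moreover have "j * s / a \<le> 3 * s / a" if "j \<le> 3" for j
    using that s assms(5) by (intro divide_right_mono mult_right_mono) auto
  ultimately show ?thesis
    using s assms(5,6) by (intro that square) (auto intro: order_trans)
qed

theorem lemma1:
  fixes hSR hRD hSP hRP hRR :: complex
    and sigmaD zeta IP PSmax PRmax :: real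
  assumes "sigmaD > 0" and "zeta \<ge> 0"
    and "(cmod hRR)^2 * zeta > 0"
    and "IP > 0" and "PSmax > 0" and "PRmax > 0"
    and "hSR \<noteq> 0" and "hRD \<noteq> 0"
  shows "\<not> convex_max_problem
            (feasible hSP hRP zeta IP PSmax PRmax \<inter> {p. snd p > 0})
            (Cbar hSR hRD sigmaD ((cmod hRR)^2 * zeta))"
proof
  define D where "D = feasible hSP hRP zeta IP PSmax PRmax \<inter> {p. snd p > 0}"
  define f where "f = Cbar hSR hRD sigmaD ((cmod hRR)^2 * zeta)"
  define a where "a = (cmod hRD)^2 / sigmaD^2"
  define b where "b = (cmod hSR)^2 / ((cmod hRR)^2 * zeta)"
  have "a > 0" "b > 0"
    using assms by (simp_all add: a_def b_def)
  then obtain s where s: "0 < s" "s \<le> 1/2" and feasible: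
    "\<And>j. 0 \<le> j \<Longrightarrow> j \<le> 3 \<Longrightarrow> (s^3 / (a * b), j * s / a) \<in> feasible hSP hRP zeta IP PSmax PRmax"
    using curve_points_feasible assms(2,4-6) by metis
  define P where "P j = (s^3 / (a * b), j * s / a)" for j :: real
  have P_in_D: "P j \<in> D" if "0 < j" "j \<le> 3" for j
    using that s feasible[of j] \<open>a > 0\<close> unfolding D_def P_def by simp
  have f_P: "f (P j) = s^3 / (1 + j * s + s^2 / j)" if "j > 0" for j
    using Cbar_on_curve \<open>a > 0\<close> \<open>b > 0\<close> s(1) that unfolding f_def P_def a_def b_def by blast
  assume "convex_max_problem D f"
  then have "concave_on D f"
    unfolding convex_max_problem_def by simp
  moreover have "P 2 = (1 - 1/2) *\<^sub>R P 1 + (1/2) *\<^sub>R P 3"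
    by (simp add: P_def)
  ultimately have "(1 - 1/2) * f (P 1) + (1/2) * f (P 3) \<le> f (P 2)"
    using concave_onD[of D f "1/2" "P 1" "P 3"] P_in_D[of 1] P_in_D[of 3] by simp
  moreover have "f (P 2) < 1/2 * f (P 1) + 1/2 * f (P 3)"
    unfolding f_P[of 1, simplified] f_P[of 2, simplified] f_P[of 3, simplified]
    using s by (intro midpoint_inequality_at_1_2_3) auto
  ultimately show False by simp
qed

end
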